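(* Assume the Continuum Hypothesis. Every real Banach space $X$ with $\operatorname{dens} X = \operatorname{dens} X^* = \omega_1$ contains an overcomplete set.
   Context: $\operatorname{dens}$ denotes the density character. A subset $S$ of a Banach space $X$ with $|S| = \operatorname{dens} X$ is called overcomplete if every subset $\Lambda \subseteq S$ with $|\Lambda| = |S|$ is linearly dense in $X$ (its closed linear span is $X$). *)

theory Defs
  imports "HOL-Analysis.Analysis"
begin

abbreviation omega1 :: "nat set rel" where
  "omega1 \<equiv> cardSuc natLeq"

definition CH :: bool where
  "CH \<longleftrightarrow> (card_of (UNIV :: real set), omega1) \<in> ordIso"

text \<open>dens_is TYPE('a) r: the density character of the whole space 'a (the least cardinality
  of a dense subset) equals the cardinal r.\<close>
definition dens_is :: "('a::topological_space) itself \<Rightarrow> 'b rel \<Rightarrow> bool" where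
  "dens_is _ r \<longleftrightarrow>
     (\<exists>D::'a set. closure D = UNIV \<and> (card_of D, r) \<in> ordIso) \<and>
     (\<forall>D::'a set. closure D = UNIV \<longrightarrow> (r, card_of D) \<in> ordLeq)"

definition overcomplete :: "('a::real_normed_vector) set \<Rightarrow> bool" where
  "overcomplete S \<longleftrightarrow> dens_is TYPE('a) (card_of S) \<and>
     (\<forall>\<Lambda>\<subseteq>S. (card_of \<Lambda>, card_of S) \<in> ordIso \<longrightarrow> closure (span \<Lambda>) = UNIV)"

end

theory Submission
  imports Defs "HOL-Library.Countable_Set_Type"
begin

(*
  Under CH the dual X* has at most 2^omega = omega1 elements, so the nonzero functionals can be
  arranged in order type omega1, each with only countably many predecessors.  By Baire's theorem
  the kernels of countably many nonzero functionals never cover X, so every g can be assigned a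
  point x g outside the kernels of all its predecessors.  Then x h lies in the kernel of g only if
  h precedes g, so every kernel meets S = {x g} in a countable set.  As X is nonseparable, every
  point lies in some kernel, hence is x g for only countably many g, and S has size omega1.
  An uncountable subset of S is annihilated by no nonzero functional and is therefore linearly
  dense by Hahn-Banach.
*)

section \<open>Hahn-Banach for sublinear functionals\<close>

text \<open>Partial linear functionals are handled through their graphs, so that Zorn's lemma applies
  to inclusion of graphs.\<close>

definition linear_graph :: "('a::real_vector \<times> real) set \<Rightarrow> bool" where
  "linear_graph G \<longleftrightarrow> (\<forall>x a b. (x, a) \<in> G \<longrightarrow> (x, b) \<in> G \<longrightarrow> a = b) \<and> (0, 0) \<in> G \<and>
     (\<forall>x a y b. (x, a) \<in> G \<longrightarrow> (y, b) \<in> G \<longrightarrow> (x + y, a + b) \<in> G) \<and>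
     (\<forall>x a r. (x, a) \<in> G \<longrightarrow> (r *\<^sub>R x, r * a) \<in> G)"

lemma
  assumes "linear_graph G"
  shows linear_graph_unique: "(x, a) \<in> G \<Longrightarrow> (x, b) \<in> G \<Longrightarrow> a = b"
    and linear_graph_zero: "(0, 0) \<in> G"
    and linear_graph_add: "(x, a) \<in> G \<Longrightarrow> (y, b) \<in> G \<Longrightarrow> (x + y, a + b) \<in> G"
    and linear_graph_scaleR: "(x, a) \<in> G \<Longrightarrow> (r *\<^sub>R x, r * a) \<in> G"
  using assms unfolding linear_graph_def by blast+

definition sublinear :: "('a::real_vector \<Rightarrow> real) \<Rightarrow> bool" where
  "sublinear p \<longleftrightarrow> (\<forall>x y. p (x + y) \<le> p x + p y) \<and> (\<forall>r x. 0 \<le> r \<longrightarrow> p (r *\<^sub>R x) = r * p x)"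

lemma
  assumes "sublinear p"
  shows sublinear_add: "p (x + y) \<le> p x + p y"
    and sublinear_scaleR: "0 \<le> r \<Longrightarrow> p (r *\<^sub>R x) = r * p x"
  using assms unfolding sublinear_def by blast+

lemma sublinear_scaled_norm: "0 \<le> c \<Longrightarrow> sublinear (\<lambda>x. c * norm x)"
  unfolding sublinear_def by (simp add: norm_triangle_ineq mult_left_mono flip: distrib_left)

definition extend_graph :: "('a::real_vector \<times> real) set \<Rightarrow> 'a \<Rightarrow> real \<Rightarrow> ('a \<times> real) set" where
  "extend_graph G x s = {(v + t *\<^sub>R x, b + t * s) | v b t. (v, b) \<in> G}"

lemma extend_graphI: "(v, b) \<in> G \<Longrightarrow> (v + t *\<^sub>R x, b + t * s) \<in> extend_graph G x s"
  unfolding extend_graph_def by blast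

lemma extend_graphE:
  assumes "(y, a) \<in> extend_graph G x s"
  obtains v b t where "(v, b) \<in> G" "y = v + t *\<^sub>R x" "a = b + t * s"
  using assms unfolding extend_graph_def by blast

lemma subset_extend_graph: "G \<subseteq> extend_graph G x s"
  using extend_graphI[of _ _ G 0] by auto

lemma linear_graph_extend_graph:
  assumes G: "linear_graph G" and x: "x \<notin> fst ` G"
  shows "linear_graph (extend_graph G x s)"
proof -
  have coeff_unique: "t = t'" if "(v, b) \<in> G" "(v', b') \<in> G" "v + t *\<^sub>R x = v' + t' *\<^sub>R x"
    for v b t v' b' t'
  proof (rule ccontr)
    assume "t \<noteq> t'"
    moreover have "(t - t') *\<^sub>R x = v' + (-1) *\<^sub>R v"
      using that(3) by (simp add: algebra_simps)
    ultimately have "x = (1 / (t - t')) *\<^sub>R (v' + (-1) *\<^sub>R v)"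
      by (metis divide_self_if eq_vector_fraction_iff right_minus_eq)
    moreover have "((1 / (t - t')) *\<^sub>R (v' + (-1) *\<^sub>R v), (1 / (t - t')) * (b' + (-1) * b)) \<in> G"
      using that(1,2) by (intro linear_graph_scaleR[OF G] linear_graph_add[OF G])
    ultimately show False
      using x by force
  qed
  show ?thesis
    unfolding linear_graph_def
  proof (intro conjI allI impI)
    fix y a a' assume "(y, a) \<in> extend_graph G x s" "(y, a') \<in> extend_graph G x s"
    then obtain v b t v' b' t' where "(v, b) \<in> G" "y = v + t *\<^sub>R x" "a = b + t * s"
      and "(v', b') \<in> G" "y = v' + t' *\<^sub>R x" "a' = b' + t' * s"
      by (elim extend_graphE)
    then show "a = a'"
      using coeff_unique linear_graph_unique[OF G] by (metis add_right_cancel)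
  next
    show "(0, 0) \<in> extend_graph G x s"
      using extend_graphI[OF linear_graph_zero[OF G], of 0] by simp
  next
    fix y a y' a' assume "(y, a) \<in> extend_graph G x s" "(y', a') \<in> extend_graph G x s"
    then obtain v b t v' b' t' where "(v, b) \<in> G" "y = v + t *\<^sub>R x" "a = b + t * s"
      and "(v', b') \<in> G" "y' = v' + t' *\<^sub>R x" "a' = b' + t' * s"
      by (elim extend_graphE)
    then show "(y + y', a + a') \<in> extend_graph G x s"
      using extend_graphI[OF linear_graph_add[OF G], of v b v' b' "t + t'" x s]
      by (simp add: algebra_simps)
  next
    fix y a r assume "(y, a) \<in> extend_graph G x s"
    then obtain v b t where "(v, b) \<in> G" "y = v + t *\<^sub>R x" "a = b + t * s"
      by (elim extend_graphE)
    then show "(r *\<^sub>R y, r * a) \<in> extend_graph G x s"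
      using extend_graphI[OF linear_graph_scaleR[OF G], of v b r "r * t" x s]
      by (simp add: algebra_simps)
  qed
qed

lemma dominated_extend_graph:
  assumes p: "sublinear p" and G: "linear_graph G" and dom: "\<forall>(v, b) \<in> G. b \<le> p v"
    and lower: "\<forall>(u, a) \<in> G. a - p (u - x) \<le> s"
    and upper: "\<forall>(w, b) \<in> G. s \<le> p (w + x) - b"
  shows "\<forall>(y, a) \<in> extend_graph G x s. a \<le> p y"
proof clarify
  fix y a assume "(y, a) \<in> extend_graph G x s"
  then obtain v b t where vb: "(v, b) \<in> G" and y: "y = v + t *\<^sub>R x" and a: "a = b + t * s"
    by (elim extend_graphE)
  consider "t = 0" | "t > 0" | "t < 0"
    by linarith
  then show "a \<le> p y"
  proof cases
    case 1
    then show ?thesis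
      using dom vb y a by auto
  next
    case 2
    have "s \<le> p ((1 / t) *\<^sub>R v + x) - (1 / t) * b"
      using upper linear_graph_scaleR[OF G vb] by blast
    then have "t * s \<le> t * p ((1 / t) *\<^sub>R v + x) - b"
      using 2 by (simp add: field_simps)
    also have "t * p ((1 / t) *\<^sub>R v + x) = p y"
      using 2 sublinear_scaleR[OF p, of t "(1 / t) *\<^sub>R v + x"] by (simp add: y algebra_simps)
    finally show ?thesis
      using a by simp
  next
    case 3
    have "(- 1 / t) * b - p ((- 1 / t) *\<^sub>R v - x) \<le> s"
      using lower linear_graph_scaleR[OF G vb] by blast
    then have "b - (- t) * p ((- 1 / t) *\<^sub>R v - x) \<le> - t * s"
      using 3 by (simp add: field_simps)
    also have "(- t) * p ((- 1 / t) *\<^sub>R v - x) = p y"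
      using 3 sublinear_scaleR[OF p, of "- t" "(- 1 / t) *\<^sub>R v - x"] by (simp add: y algebra_simps)
    finally show ?thesis
      using a by simp
  qed
qed

lemma extension_value_exists:
  assumes p: "sublinear p" and G: "linear_graph G" and dom: "\<forall>(v, b) \<in> G. b \<le> p v"
  shows "\<exists>s. (\<forall>(u, a) \<in> G. a - p (u - x) \<le> s) \<and> (\<forall>(w, b) \<in> G. s \<le> p (w + x) - b)"
proof -
  have between: "a - p (u - x) \<le> p (w + x) - b" if "(u, a) \<in> G" "(w, b) \<in> G" for u a w b
  proof -
    have "a + b \<le> p (u + w)"
      using dom linear_graph_add[OF G that] by auto
    also have "\<dots> = p ((u - x) + (w + x))"
      by simp
    also have "\<dots> \<le> p (u - x) + p (w + x)"
      by (rule sublinear_add[OF p])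
    finally show ?thesis
      by simp
  qed
  define A where "A = (\<lambda>(u, a). a - p (u - x)) ` G"
  have "A \<noteq> {}"
    using linear_graph_zero[OF G] unfolding A_def by blast
  moreover have "bdd_above A"
    unfolding A_def bdd_above_def using between[OF _ linear_graph_zero[OF G]] by force
  ultimately have "a - p (u - x) \<le> Sup A" "Sup A \<le> p (w + x) - b"
    if "(u, a) \<in> G" "(w, b) \<in> G" for u a w b
    using that between unfolding A_def by (force intro: cSup_upper cSup_least)+
  then show ?thesis
    by blast
qed

lemma linear_graph_Union_chain:
  assumes "C \<noteq> {}" and "\<forall>G \<in> C. linear_graph G" and "chain\<^sub>\<subseteq> C"
  shows "linear_graph (\<Union>C)"
proof -
  have common: "\<exists>G \<in> C. q \<in> G \<and> q' \<in> G" if "q \<in> \<Union>C" "q' \<in> \<Union>C" for q q'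
    using that \<open>chain\<^sub>\<subseteq> C\<close> unfolding chain_subset_def by blast
  show ?thesis
    unfolding linear_graph_def
  proof (intro conjI allI impI)
    fix x a b assume "(x, a) \<in> \<Union>C" "(x, b) \<in> \<Union>C"
    then show "a = b"
      using common assms(2) linear_graph_unique by metis
  next
    show "(0, 0) \<in> \<Union>C"
      using assms(1,2) linear_graph_zero by blast
  next
    fix x a y b assume "(x, a) \<in> \<Union>C" "(y, b) \<in> \<Union>C"
    then show "(x + y, a + b) \<in> \<Union>C"
      using common assms(2) linear_graph_add by (metis UnionI)
  next
    fix x a r assume "(x, a) \<in> \<Union>C"
    then show "(r *\<^sub>R x, r * a) \<in> \<Union>C"
      using assms(2) linear_graph_scaleR by blast
  qed
qed

lemma ex_total_dominated_linear_graph: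
  assumes p: "sublinear p" and G0: "linear_graph G0" and dom0: "\<forall>(x, a) \<in> G0. a \<le> p x"
  shows "\<exists>M. linear_graph M \<and> (\<forall>(x, a) \<in> M. a \<le> p x) \<and> G0 \<subseteq> M \<and> fst ` M = UNIV"
proof -
  define \<A> where "\<A> = {G. linear_graph G \<and> (\<forall>(x, a) \<in> G. a \<le> p x) \<and> G0 \<subseteq> G}"
  have "\<forall>C \<in> chains \<A>. \<exists>U \<in> \<A>. \<forall>G \<in> C. G \<subseteq> U"
  proof
    fix C assume "C \<in> chains \<A>"
    show "\<exists>U \<in> \<A>. \<forall>G \<in> C. G \<subseteq> U"
    proof (cases "C = {}")
      case True
      then show ?thesis
        using G0 dom0 unfolding \<A>_def by blast
    next
      case False
      with \<open>C \<in> chains \<A>\<close> have "linear_graph (\<Union>C)"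
        by (intro linear_graph_Union_chain) (auto simp: chains_def \<A>_def)
      with False \<open>C \<in> chains \<A>\<close> show ?thesis
        unfolding \<A>_def chains_def by blast
    qed
  qed
  then obtain M where "M \<in> \<A>" and max: "\<forall>G \<in> \<A>. M \<subseteq> G \<longrightarrow> G = M"
    by (blast dest: Zorn_Lemma2)
  then have M: "linear_graph M" and domM: "\<forall>(x, a) \<in> M. a \<le> p x" and "G0 \<subseteq> M"
    unfolding \<A>_def by blast+
  have "x \<in> fst ` M" for x
  proof (rule ccontr)
    assume x: "x \<notin> fst ` M"
    obtain s where "\<forall>(u, a) \<in> M. a - p (u - x) \<le> s" "\<forall>(w, b) \<in> M. s \<le> p (w + x) - b"
      using extension_value_exists[OF p M domM, of x] by (elim exE conjE)
    then have "\<forall>(y, a) \<in> extend_graph M x s. a \<le> p y"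
      by (rule dominated_extend_graph[OF p M domM])
    moreover have "linear_graph (extend_graph M x s)"
      by (rule linear_graph_extend_graph[OF M x])
    moreover have "M \<subseteq> extend_graph M x s"
      by (rule subset_extend_graph)
    ultimately have "extend_graph M x s = M"
      using max \<open>G0 \<subseteq> M\<close> unfolding \<A>_def by auto
    moreover have "(x, s) \<in> extend_graph M x s"
      using extend_graphI[OF linear_graph_zero[OF M], of 1 x s] by simp
    ultimately show False
      using x by (metis fst_conv image_eqI)
  qed
  then show ?thesis
    using M domM \<open>G0 \<subseteq> M\<close> by blast
qed

lemma linear_graph_total_imp_graph_of_linear:
  assumes M: "linear_graph M" and total: "fst ` M = UNIV"
  shows "\<exists>f. linear f \<and> (\<forall>x a. (x, a) \<in> M \<longleftrightarrow> f x = a)"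
proof -
  define f where "f x = (THE a. (x, a) \<in> M)" for x
  have graph_f: "(x, a) \<in> M \<longleftrightarrow> f x = a" for x a
  proof -
    obtain b where b: "(x, b) \<in> M"
      using total by (metis UNIV_I fst_conv imageE surjective_pairing)
    then have "f x = b"
      unfolding f_def by (rule the_equality) (rule linear_graph_unique[OF M _ b])
    then show ?thesis
      using b linear_graph_unique[OF M] by metis
  qed
  have "linear f"
  proof
    show "f (x + y) = f x + f y" for x y
      using linear_graph_add[OF M, of x "f x" y "f y"] graph_f by simp
    show "f (r *\<^sub>R x) = r *\<^sub>R f x" for r x
      using linear_graph_scaleR[OF M, of x "f x" r] graph_f by simp
  qed
  then show ?thesis
    using graph_f by blast
qed

theorem Hahn_Banach_sublinear:
  assumes p: "sublinear p" and G0: "linear_graph G0" and dom0: "\<forall>(x, a) \<in> G0. a \<le> p x"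
  shows "\<exists>f. linear f \<and> (\<forall>x. f x \<le> p x) \<and> (\<forall>(x, a) \<in> G0. f x = a)"
proof -
  obtain M where M: "linear_graph M" and domM: "\<forall>(x, a) \<in> M. a \<le> p x"
    and "G0 \<subseteq> M" and "fst ` M = UNIV"
    using ex_total_dominated_linear_graph[OF p G0 dom0] by blast
  then obtain f where "linear f" and graph_f: "\<forall>x a. (x, a) \<in> M \<longleftrightarrow> f x = a"
    using linear_graph_total_imp_graph_of_linear by blast
  moreover have "f x \<le> p x" for x
    using domM graph_f by auto
  moreover have "\<forall>(x, a) \<in> G0. f x = a"
    using \<open>G0 \<subseteq> M\<close> graph_f by auto
  ultimately show ?thesis
    by blast
qed

section \<open>Functionals on normed spaces\<close>

lemma bounded_linear_if_dominated_by_norm: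
  fixes f :: "'a::real_normed_vector \<Rightarrow> real"
  assumes f: "linear f" and dom: "\<forall>x. f x \<le> c * norm x"
  shows "bounded_linear f"
proof (rule bounded_linear_intro[where K = c])
  show "f (x + y) = f x + f y" "f (r *\<^sub>R x) = r *\<^sub>R f x" for x y r
    using f by (simp_all add: linear_add linear_scale)
  show "norm (f x) \<le> norm x * c" for x
    using dom[rule_format, of x] dom[rule_format, of "- x"] linear_neg[OF f, of x]
    by (simp add: abs_le_iff mult.commute)
qed

lemma infdist_closure_span_le_norm:
  assumes "w \<in> span L"
  shows "infdist x (closure (span L)) \<le> norm (w + x)"
proof -
  have "- w \<in> closure (span L)"
    using assms span_neg closure_subset by blast
  then have "infdist x (closure (span L)) \<le> dist x (- w)"
    by (rule infdist_le)
  then show ?thesis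
    by (simp add: dist_norm add.commute)
qed

lemma functional_separating_point_from_span:
  fixes L :: "'a::real_normed_vector set"
  assumes x0: "x0 \<notin> closure (span L)"
  shows "\<exists>g::'a \<Rightarrow>\<^sub>L real. g x0 = 1 \<and> (\<forall>z \<in> L. g z = 0)"
proof -
  define d where "d = infdist x0 (closure (span L))"
  have d: "d > 0"
    unfolding d_def using x0 span_zero closure_subset by (intro infdist_pos_not_in_closed) auto
  define H where "H = (\<lambda>z. (z, 0::real)) ` span L"
  have H: "linear_graph H"
    unfolding linear_graph_def H_def by (auto simp: span_zero span_add span_scale)
  have "x0 \<notin> fst ` H"
    using x0 closure_subset unfolding H_def by force
  then have G0: "linear_graph (extend_graph H x0 1)"
    by (rule linear_graph_extend_graph[OF H])
  \<comment> \<open>The functional z + t x0 \<mapsto> t on span (L \<union> {x0}) has norm 1 / d.\<close>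
  define p where "p x = (1 / d) * norm x" for x :: 'a
  have p: "sublinear p"
    unfolding p_def using d by (intro sublinear_scaled_norm) simp
  have "\<forall>(y, a) \<in> extend_graph H x0 1. a \<le> p y"
  proof (rule dominated_extend_graph[OF p H])
    show "\<forall>(v, b) \<in> H. b \<le> p v" "\<forall>(u, a) \<in> H. a - p (u - x0) \<le> 1"
      unfolding H_def p_def using d by (auto intro: order_trans[of _ 0])
    show "\<forall>(w, b) \<in> H. 1 \<le> p (w + x0) - b"
      unfolding H_def p_def using d infdist_closure_span_le_norm[of _ L x0, folded d_def]
      by (auto simp: field_simps)
  qed
  then obtain f where f: "linear f" "\<forall>x. f x \<le> p x" "\<forall>(x, a) \<in> extend_graph H x0 1. f x = a"
    using Hahn_Banach_sublinear[OF p G0] by blast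
  have "bounded_linear f"
    using f(1,2) unfolding p_def by (rule bounded_linear_if_dominated_by_norm)
  then have Blinfun_f: "blinfun_apply (Blinfun f) = f"
    by (rule bounded_linear_Blinfun_apply)
  have "(0, 0) \<in> H"
    by (rule linear_graph_zero[OF H])
  then have "f x0 = 1"
    using f(3) extend_graphI[of 0 0 H 1 x0 1] by auto
  moreover have "f z = 0" if "z \<in> L" for z
  proof -
    have "(z, 0) \<in> H"
      unfolding H_def using that span_base by blast
    then show ?thesis
      using f(3) extend_graphI[of z 0 H 0 x0 1] by auto
  qed
  ultimately show ?thesis
    using Blinfun_f by (intro exI[of _ "Blinfun f"]) simp
qed

lemma interior_blinfun_kernel_eq_empty:
  fixes h :: "'a::real_normed_vector \<Rightarrow>\<^sub>L real"
  assumes "h \<noteq> 0"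
  shows "interior {x. h x = 0} = {}"
proof (rule ccontr)
  assume "interior {x. h x = 0} \<noteq> {}"
  then obtain y e where e: "e > 0" and ball: "ball y e \<subseteq> {x. h x = 0}"
    by (metis equals0I mem_interior)
  obtain v where v: "h v \<noteq> 0"
    using assms by (metis blinfun_eqI zero_blinfun.rep_eq)
  then have "v \<noteq> 0"
    by auto
  define w where "w = (e / (2 * norm v)) *\<^sub>R v"
  have "norm w < e"
    using e \<open>v \<noteq> 0\<close> by (simp add: w_def)
  then have "y + w \<in> ball y e" "y \<in> ball y e"
    using e by (simp_all add: dist_norm)
  then have "h (y + w) = 0" "h y = 0"
    using ball by blast+
  then have "(e / (2 * norm v)) * h v = 0"
    by (simp add: w_def blinfun.add_right blinfun.scaleR_right)
  then show False
    using e v \<open>v \<noteq> 0\<close> by simp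
qed

lemma ex_point_outside_kernels:
  fixes C :: "('a::banach \<Rightarrow>\<^sub>L real) set"
  assumes "countable C" and "0 \<notin> C"
  shows "\<exists>x. \<forall>h \<in> C. h x \<noteq> 0"
proof (rule ccontr)
  let ?\<K> = "(\<lambda>h. {x. blinfun_apply h x = 0}) ` C"
  assume "\<nexists>x. \<forall>h \<in> C. h x \<noteq> 0"
  then have "\<Union>?\<K> = UNIV"
    by blast
  moreover have "euclidean interior_of \<Union>?\<K> = {}"
  proof (rule Baire_category_alt)
    show "completely_metrizable_space (euclidean :: 'a topology) \<or>
      locally_compact_space (euclidean :: 'a topology) \<and> regular_space (euclidean :: 'a topology)"
      using completely_metrizable_space_euclidean by blast
    show "countable ?\<K>"
      using assms(1) by simp
    fix K assume "K \<in> ?\<K>"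
    then obtain h where "h \<in> C" and K: "K = {x. h x = 0}"
      by blast
    have "closed K"
      unfolding K by (intro closed_Collect_eq continuous_intros)
    moreover have "interior K = {}"
      unfolding K using \<open>h \<in> C\<close> assms(2) by (intro interior_blinfun_kernel_eq_empty) auto
    ultimately show "closedin euclidean K \<and> euclidean interior_of K = {}"
      by (simp add: euclidean_interior_of)
  qed
  ultimately show False
    by (simp add: euclidean_interior_of)
qed

lemma ex_nonzero_functional_vanishing_at:
  fixes x :: "'a::real_normed_vector"
  assumes nonsep: "\<forall>D::'a set. closure D = UNIV \<longrightarrow> \<not> countable D"
  shows "\<exists>g::'a \<Rightarrow>\<^sub>L real. g \<noteq> 0 \<and> blinfun_apply g x = 0"
proof -
  define D where "D = (\<lambda>q. q *\<^sub>R x) ` \<rat>"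
  have "countable D"
    unfolding D_def by (simp add: countable_rat)
  have "span {x} = (\<lambda>q. q *\<^sub>R x) ` closure \<rat>"
    by (simp add: span_singleton Rats_closure_real)
  also have "\<dots> \<subseteq> closure D"
    unfolding D_def by (intro image_closure_subset continuous_intros closure_subset) auto
  finally have "closure (span {x}) \<subseteq> closure D"
    by (simp add: closure_minimal)
  then have "closure (span {x}) \<noteq> UNIV"
    using nonsep \<open>countable D\<close> by auto
  then obtain y where "y \<notin> closure (span {x})"
    by blast
  then obtain g :: "'a \<Rightarrow>\<^sub>L real" where "g y = 1" "g x = 0"
    using functional_separating_point_from_span by blast
  then show ?thesis
    by (metis zero_blinfun.rep_eq zero_neq_one)
qed

section \<open>Cardinality bounds under CH\<close>

lemma countable_if_countable_fibres:
  assumes "countable (f ` A)" and "\<And>y. countable {x \<in> A. f x = y}"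
  shows "countable A"
proof -
  have "A \<subseteq> (\<Union>y \<in> f ` A. {x \<in> A. f x = y})"
    by blast
  moreover have "countable (\<Union>y \<in> f ` A. {x \<in> A. f x = y})"
    using assms by (intro countable_UN)
  ultimately show ?thesis
    by (rule countable_subset)
qed

context
  includes cardinal_syntax
begin

lemma omega1_ordLeq_iff_uncountable: "omega1 \<le>o |A| \<longleftrightarrow> \<not> countable A"
proof
  assume "omega1 \<le>o |A|"
  show "\<not> countable A"
  proof
    assume "countable A"
    then have "omega1 \<le>o natLeq"
      using \<open>omega1 \<le>o |A|\<close> countable_card_le_natLeq ordLeq_transitive by blast
    moreover have "natLeq <o omega1"
      by (simp add: cardSuc_greater natLeq_Card_order)
    ultimately show False
      using not_ordLess_ordLeq by blast
  qed
next
  assume "\<not> countable A"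
  then have "natLeq <o |A|"
    using countable_card_le_natLeq not_ordLeq_iff_ordLess[OF natLeq_Well_order card_of_Well_order]
    by blast
  then show "omega1 \<le>o |A|"
    using cardSuc_ordLess_ordLeq[OF natLeq_Card_order card_of_Card_order] by blast
qed

lemma countable_under_omega1:
  assumes "a \<in> Field omega1"
  shows "countable (under omega1 a)"
proof -
  have "|underS omega1 a| <o omega1"
    by (rule card_of_underS[OF cardSuc_Card_order[OF natLeq_Card_order] assms])
  then have "countable (underS omega1 a)"
    using omega1_ordLeq_iff_uncountable[of "underS omega1 a"] not_ordLess_ordLeq by auto
  moreover have "under omega1 a \<subseteq> insert a (underS omega1 a)"
    unfolding under_def underS_def by blast
  ultimately show ?thesis
    by (metis countable_insert countable_subset)
qed

lemma ex_total_relation_countable_segments: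
  assumes "|F| \<le>o omega1"
  shows "\<exists>R. (\<forall>g \<in> F. \<forall>h \<in> F. R g h \<or> R h g) \<and> (\<forall>g \<in> F. countable {h \<in> F. R h g})"
proof -
  have "|F| \<le>o |Field omega1|"
    using assms ordIso_symmetric[OF card_of_Field_ordIso[OF cardSuc_Card_order[OF natLeq_Card_order]]]
    by (rule ordLeq_ordIso_trans)
  then obtain \<phi> where \<phi>: "inj_on \<phi> F" "\<phi> ` F \<subseteq> Field omega1"
    by (auto simp flip: card_of_ordLeq)
  define R where "R g h \<longleftrightarrow> (\<phi> g, \<phi> h) \<in> omega1" for g h
  have "wo_rel omega1"
    unfolding wo_rel_def by (rule cardSuc_Well_order[OF natLeq_Card_order])
  then have "R g h \<or> R h g" if "g \<in> F" "h \<in> F" for g h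
    using wo_rel.TOTALS \<phi>(2) that unfolding R_def by (meson image_subset_iff)
  moreover have "countable {h \<in> F. R h g}" if "g \<in> F" for g
  proof -
    have "countable (under omega1 (\<phi> g))"
      using countable_under_omega1 \<phi>(2) that by blast
    then have "countable {h \<in> F. \<phi> h \<in> under omega1 (\<phi> g)}"
      by (rule countable_image_inj_gen[OF \<phi>(1)])
    then show ?thesis
      unfolding R_def under_def by simp
  qed
  ultimately show ?thesis
    by blast
qed

lemma inj_approximating_sequences:
  fixes D :: "'a::metric_space set"
  assumes "closure D = UNIV"
  shows "\<exists>\<phi>::'a \<Rightarrow> nat \<Rightarrow> 'a. inj \<phi> \<and> (\<forall>x n. \<phi> x n \<in> D)"
proof -
  have "\<forall>x n. \<exists>d. d \<in> D \<and> dist d x < inverse (real (Suc n))"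
    using assms closure_approachable by (metis UNIV_I inverse_positive_iff_positive of_nat_0_less_iff zero_less_Suc)
  then obtain \<phi> where \<phi>: "\<forall>x n. \<phi> x n \<in> D \<and> dist (\<phi> x n) x < inverse (real (Suc n))"
    by metis
  have lim: "\<phi> x \<longlonglongrightarrow> x" for x
    unfolding tendsto_dist_iff[of "\<phi> x"]
    by (rule tendsto_sandwich[OF _ _ tendsto_const LIMSEQ_inverse_real_of_nat])
      (use \<phi> in \<open>simp_all add: order.strict_implies_order\<close>)
  have "inj \<phi>"
  proof (rule injI)
    fix x y assume "\<phi> x = \<phi> y"
    then show "x = y"
      using lim[of x] lim[of y] by (metis LIMSEQ_unique)
  qed
  then show ?thesis
    using \<phi> by blast
qed

lemma inj_encode_nat_set_sequences: "inj (\<lambda>F::nat \<Rightarrow> nat set. prod_encode ` Sigma UNIV F)"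
proof (rule injI)
  fix F G :: "nat \<Rightarrow> nat set"
  assume "prod_encode ` Sigma UNIV F = prod_encode ` Sigma UNIV G"
  then have Sigma_eq: "Sigma UNIV F = Sigma UNIV G"
    by (simp add: inj_image_eq_iff inj_prod_encode)
  show "F = G"
  proof (intro ext set_eqI)
    show "m \<in> F n \<longleftrightarrow> m \<in> G n" for n m
      using Sigma_eq by (metis SigmaD2 SigmaI UNIV_I)
  qed
qed

lemma card_of_UNIV_ordLeq_nat_sets_if_dense:
  fixes D :: "'a::metric_space set"
  assumes "closure D = UNIV" and "|D| \<le>o |UNIV :: nat set set|"
  shows "|UNIV :: 'a set| \<le>o |UNIV :: nat set set|"
proof -
  obtain e :: "'a \<Rightarrow> nat set" where e: "inj_on e D"
    using assms(2) by (auto simp flip: card_of_ordLeq)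
  obtain \<phi> :: "'a \<Rightarrow> nat \<Rightarrow> 'a" where \<phi>: "inj \<phi>" "\<forall>x n. \<phi> x n \<in> D"
    using inj_approximating_sequences[OF assms(1)] by blast
  have "inj (\<lambda>x. prod_encode ` Sigma UNIV (\<lambda>n. e (\<phi> x n)))"
  proof (rule injI)
    fix x y
    assume "prod_encode ` Sigma UNIV (\<lambda>n. e (\<phi> x n)) = prod_encode ` Sigma UNIV (\<lambda>n. e (\<phi> y n))"
    then have "(\<lambda>n. e (\<phi> x n)) = (\<lambda>n. e (\<phi> y n))"
      by (rule injD[OF inj_encode_nat_set_sequences])
    then have "\<phi> x n = \<phi> y n" for n
      using inj_onD[OF e] \<phi>(2) by (metis fun_cong)
    then show "x = y"
      using \<phi>(1) by (metis ext injD)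
  qed
  then show ?thesis
    by (auto simp flip: card_of_ordLeq)
qed

lemma CH_omega1_ordIso_nat_sets:
  assumes "CH"
  shows "omega1 =o |UNIV :: nat set set|"
proof -
  have "|UNIV :: nat set set| =o |UNIV :: real set|"
    using nat_sets_eqpoll_reals by (simp add: eqpoll_iff_card_of_ordIso)
  then show ?thesis
    using assms unfolding CH_def by (metis ordIso_symmetric ordIso_transitive)
qed

lemma card_of_UNIV_ordLeq_omega1:
  assumes "CH" and "dens_is TYPE('a::metric_space) omega1"
  shows "|UNIV :: 'a set| \<le>o omega1"
proof -
  have omega1: "omega1 =o |UNIV :: nat set set|"
    using assms(1) by (rule CH_omega1_ordIso_nat_sets)
  obtain D :: "'a set" where D: "closure D = UNIV" "|D| =o omega1"
    using assms(2) unfolding dens_is_def by blast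
  then have "|D| \<le>o |UNIV :: nat set set|"
    using ordIso_imp_ordLeq[OF ordIso_transitive[OF D(2) omega1]] by blast
  with D(1) have "|UNIV :: 'a set| \<le>o |UNIV :: nat set set|"
    by (rule card_of_UNIV_ordLeq_nat_sets_if_dense)
  then show ?thesis
    using ordIso_symmetric[OF omega1] by (rule ordLeq_ordIso_trans)
qed

lemma dens_is_ordIso: "dens_is T r \<Longrightarrow> r =o r' \<Longrightarrow> dens_is T r'"
  unfolding dens_is_def by (meson ordIso_symmetric ordIso_ordLeq_trans ordIso_transitive)

lemma dens_is_omega1_imp_uncountable:
  assumes "dens_is TYPE('a::topological_space) omega1" and "closure (D :: 'a set) = UNIV"
  shows "\<not> countable D"
  using assms omega1_ordLeq_iff_uncountable unfolding dens_is_def by blast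

section \<open>The overcomplete set\<close>

lemma ex_omega1_set_with_countable_kernel_traces:
  assumes card: "|UNIV :: ('a::banach \<Rightarrow>\<^sub>L real) set| \<le>o omega1"
    and uncountable: "\<not> countable (UNIV :: ('a \<Rightarrow>\<^sub>L real) set)"
    and kernels: "\<forall>y::'a. \<exists>g::'a \<Rightarrow>\<^sub>L real. g \<noteq> 0 \<and> blinfun_apply g y = 0"
  shows "\<exists>S::'a::banach set. |S| =o omega1 \<and>
    (\<forall>g::'a \<Rightarrow>\<^sub>L real. g \<noteq> 0 \<longrightarrow> countable {s \<in> S. blinfun_apply g s = 0})"
proof -
  define F where "F = (UNIV :: ('a \<Rightarrow>\<^sub>L real) set) - {0}"
  have "|F| \<le>o omega1"
    using card_of_mono1[of F UNIV] card by (auto elim: ordLeq_transitive)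
  then obtain R where total: "\<forall>g \<in> F. \<forall>h \<in> F. R g h \<or> R h g"
    and segments: "\<forall>g \<in> F. countable {h \<in> F. R h g}"
    using ex_total_relation_countable_segments[OF \<open>|F| \<le>o omega1\<close>] by auto
  define B where "B g = {h \<in> F. R h g}" for g
  have B: "countable (B g)" "0 \<notin> B g" if "g \<in> F" for g
    using segments that unfolding B_def F_def by auto
  have "\<forall>g \<in> F. \<exists>y. \<forall>h \<in> B g. h y \<noteq> 0"
    using B ex_point_outside_kernels by blast
  then obtain x where x: "\<forall>g \<in> F. \<forall>h \<in> B g. h (x g) \<noteq> 0"
    by (rule bchoice[elim_format]) blast
  define S where "S = x ` F"
  have kernel_earlier: "h \<in> B g" if "g \<in> F" "h \<in> F" "g (x h) = 0" for g h
  proof -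
    have "g \<notin> B h"
      using x that(2,3) by blast
    then have "R h g"
      using total that(1,2) unfolding B_def by blast
    then show ?thesis
      using that(2) unfolding B_def by blast
  qed
  have traces: "countable {s \<in> S. g s = 0}" if "g \<in> F" for g
  proof -
    have "{s \<in> S. g s = 0} \<subseteq> x ` B g"
      using kernel_earlier[OF that] unfolding S_def by blast
    moreover have "countable (x ` B g)"
      using B(1)[OF that] by (rule countable_image)
    ultimately show ?thesis
      by (rule countable_subset)
  qed
  have "\<not> countable S"
  proof
    assume "countable S"
    moreover have "countable {h \<in> F. x h = s}" for s
    proof -
      obtain g :: "'a \<Rightarrow>\<^sub>L real" where "g \<noteq> 0" "g s = 0"
        using kernels by blast
      then have "g \<in> F"
        unfolding F_def by simp
      with \<open>g s = 0\<close> have "{h \<in> F. x h = s} \<subseteq> B g"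
        using kernel_earlier by blast
      then show ?thesis
        using B(1)[OF \<open>g \<in> F\<close>] by (rule countable_subset)
    qed
    ultimately have "countable F"
      unfolding S_def by (rule countable_if_countable_fibres)
    then show False
      using uncountable unfolding F_def by simp
  qed
  moreover have "|S| \<le>o omega1"
    unfolding S_def using card_of_image \<open>|F| \<le>o omega1\<close> by (rule ordLeq_transitive)
  ultimately have "|S| =o omega1"
    using omega1_ordLeq_iff_uncountable ordIso_iff_ordLeq by blast
  then show ?thesis
    using traces unfolding F_def by blast
qed

end

lemma closure_span_eq_UNIV_if_uncountable_subset:
  fixes S :: "'a::real_normed_vector set"
  assumes traces: "\<forall>g::'a \<Rightarrow>\<^sub>L real. g \<noteq> 0 \<longrightarrow> countable {s \<in> S. blinfun_apply g s = 0}"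
    and "\<Lambda> \<subseteq> S" and "\<not> countable \<Lambda>"
  shows "closure (span \<Lambda>) = UNIV"
proof (rule ccontr)
  assume "closure (span \<Lambda>) \<noteq> UNIV"
  then obtain y where "y \<notin> closure (span \<Lambda>)"
    by blast
  then obtain g :: "'a \<Rightarrow>\<^sub>L real" where "g y = 1" and "\<forall>z \<in> \<Lambda>. g z = 0"
    using functional_separating_point_from_span by blast
  then have "g \<noteq> 0"
    by (metis zero_blinfun.rep_eq zero_neq_one)
  have "\<Lambda> \<subseteq> {s \<in> S. g s = 0}"
    using \<open>\<Lambda> \<subseteq> S\<close> \<open>\<forall>z \<in> \<Lambda>. g z = 0\<close> by blast
  then have "countable \<Lambda>"
    using traces \<open>g \<noteq> 0\<close> countable_subset by blast
  with \<open>\<not> countable \<Lambda>\<close> show False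
    by contradiction
qed

theorem corollary3p2:
  assumes "CH"
    and "dens_is TYPE('a::banach) omega1"
    and "dens_is TYPE('a \<Rightarrow>\<^sub>L real) omega1"
  shows "\<exists>S::'a set. overcomplete S"
proof -
  include cardinal_syntax
  have "|UNIV :: ('a \<Rightarrow>\<^sub>L real) set| \<le>o omega1"
    using assms(1,3) by (rule card_of_UNIV_ordLeq_omega1)
  moreover have "\<not> countable (UNIV :: ('a \<Rightarrow>\<^sub>L real) set)"
    using assms(3) by (rule dens_is_omega1_imp_uncountable) simp
  moreover have "\<forall>y::'a. \<exists>g::'a \<Rightarrow>\<^sub>L real. g \<noteq> 0 \<and> blinfun_apply g y = 0"
    using dens_is_omega1_imp_uncountable[OF assms(2)] ex_nonzero_functional_vanishing_at by blast
  ultimately have "\<exists>S::'a set. |S| =o omega1 \<and>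
      (\<forall>g::'a \<Rightarrow>\<^sub>L real. g \<noteq> 0 \<longrightarrow> countable {s \<in> S. blinfun_apply g s = 0})"
    by (rule ex_omega1_set_with_countable_kernel_traces)
  then obtain S :: "'a set" where S: "|S| =o omega1"
    and traces: "\<forall>g::'a \<Rightarrow>\<^sub>L real. g \<noteq> 0 \<longrightarrow> countable {s \<in> S. blinfun_apply g s = 0}"
    by blast
  have "closure (span \<Lambda>) = UNIV" if "\<Lambda> \<subseteq> S" and "|\<Lambda>| =o |S|" for \<Lambda>
  proof (rule closure_span_eq_UNIV_if_uncountable_subset[OF traces \<open>\<Lambda> \<subseteq> S\<close>])
    show "\<not> countable \<Lambda>"
      using ordIso_transitive[OF \<open>|\<Lambda>| =o |S|\<close> S] omega1_ordLeq_iff_uncountable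
        ordIso_iff_ordLeq by blast
  qed
  moreover have "dens_is TYPE('a) |S|"
    using assms(2) ordIso_symmetric[OF S] by (rule dens_is_ordIso)
  ultimately show ?thesis
    unfolding overcomplete_def by blast
qed

end
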